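(* Let $\mu_1,\mu_2,\mu_3$ be three mass distributions in $\mathbb{R}^2$ and let $q$ be a point of $\mathbb{R}^2$. Then there exist two lines $\ell_1,\ell_2$ (where $\ell_2$ may be a line at infinity) such that $\{\ell_1,\ell_2\}$ simultaneously bisects $\mu_1,\mu_2,\mu_3$ and $\ell_1$ goes through $q$.
   Context: A mass distribution $\mu$ on $\mathbb{R}^2$ is a measure such that all open subsets are measurable, $0<\mu(\mathbb{R}^2)<\infty$, and $\mu(S)=0$ for every lower-dimensional subset $S$. For a finite set $\mathcal{L}$ of oriented lines, each $\ell\in\mathcal{L}$ has positive side $\ell^+=\{x: g(x)\ge 0\}$ for a defining affine function $g(x)=a_1x_1+a_2x_2+a_0$; lines at infinity ($g\equiv a_0\neq 0$ constant) are allowed, with $\ell^+=\mathbb{R}^2$, $\ell^-=\emptyset$. Let $\lambda(p)$ be the number of lines of $\mathcal{L}$ having $p$ on their positive side, $R^+=\{p:\lambda(p)\text{ even}\}$, $R^-=\{p:\lambda(p)\text{ odd}\}$. $\mathcal{L}$ simultaneously bisects $\mu_1,\dots,\mu_k$ if $\mu_i(R^+)=\mu_i(R^-)$ for all $i$; an unoriented set of lines bisects if some orientation does. *)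

theory Defs
  imports "HOL-Analysis.Analysis"
begin

definition mass_distribution :: "(real^2) measure \<Rightarrow> bool" where
  "mass_distribution \<mu> \<longleftrightarrow>
     space \<mu> = UNIV \<and>
     sets borel \<subseteq> sets \<mu> \<and>
     0 < emeasure \<mu> UNIV \<and> emeasure \<mu> UNIV < \<infinity> \<and>
     (\<forall>(a::real^2) (c::real). a \<noteq> 0 \<longrightarrow> emeasure \<mu> {x. a \<bullet> x + c = 0} = 0)"

text \<open>An oriented line is given by its defining affine function g(x) = a . x + c,
  encoded as the pair (a, c), with (a, c) not both zero. If a = 0 it is a line at
  infinity (positive side = whole plane).\<close>

type_synonym oline = "(real^2) \<times> real"

definition valid_line :: "oline \<Rightarrow> bool" where
  "valid_line l \<longleftrightarrow> fst l \<noteq> 0 \<or> snd l \<noteq> 0"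

definition proper_line :: "oline \<Rightarrow> bool" where
  "proper_line l \<longleftrightarrow> fst l \<noteq> 0"

definition on_line :: "real^2 \<Rightarrow> oline \<Rightarrow> bool" where
  "on_line p l \<longleftrightarrow> fst l \<bullet> p + snd l = 0"

definition pos_side :: "oline \<Rightarrow> (real^2) set" where
  "pos_side l = {x. fst l \<bullet> x + snd l \<ge> 0}"

definition lam :: "oline list \<Rightarrow> real^2 \<Rightarrow> nat" where
  "lam L p = length (filter (\<lambda>l. p \<in> pos_side l) L)"

definition R_plus :: "oline list \<Rightarrow> (real^2) set" where
  "R_plus L = {p. even (lam L p)}"

definition R_minus :: "oline list \<Rightarrow> (real^2) set" where
  "R_minus L = {p. odd (lam L p)}"

definition simul_bisects :: "oline list \<Rightarrow> (real^2) measure list \<Rightarrow> bool" where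
  "simul_bisects L Ms \<longleftrightarrow>
     (\<forall>\<mu>\<in>set Ms. emeasure \<mu> (R_plus L) = emeasure \<mu> (R_minus L))"

end

theory Submission
  imports Defs
begin

text \<open>
  Take the first line through \<open>q\<close> with direction \<open>\<theta> \<in> [0, pi]\<close>, and describe the second line,
  up to positive scaling, by spherical coordinates \<open>(\<phi>, t)\<close> with the first line as pole. The
  bisection defect \<open>\<mu>(R\<^sup>+) - \<mu>(R\<^sup>-)\<close> of \<open>\<mu>\<^sub>3\<close> decreases in \<open>t\<close>, so after an
  \<open>\<epsilon>\<close>-perturbation it vanishes at a unique \<open>t = T(\<theta>, \<phi>)\<close>. Along this section the defects of
  \<open>\<mu>\<^sub>1\<close> and \<open>\<mu>\<^sub>2\<close> form a map to \<open>\<complex>\<close> that is odd under the antipodal map of the sphere and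
  is glued with a twist at \<open>\<theta> = pi\<close>, where the first line comes back with reversed
  orientation; a winding number argument shows that such a map has a zero. Compactness then
  lets \<open>\<epsilon>\<close> tend to \<open>0\<close>.
\<close>

section \<open>Zeros of twisted maps on a rectangle\<close>

lemma exp_ii_eq_imp_diff_int_2pi:
  assumes "exp (\<i> * complex_of_real a) = exp (\<i> * complex_of_real b)"
  shows "\<exists>n::int. a - b = 2 * pi * n"
proof -
  from assms obtain n :: int
    where "\<i> * complex_of_real a = \<i> * complex_of_real b + (of_int (2 * n) * pi) * \<i>"
    using exp_eq by blast
  then have "Im (\<i> * complex_of_real a) = Im (\<i> * complex_of_real b + (of_int (2 * n) * pi) * \<i>)"
    by simp
  then show ?thesis by (intro exI[of _ n]) (simp add: algebra_simps)
qed

lemma constant_on_if_exp_ii_constant: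
  fixes d :: "'a::real_normed_vector \<Rightarrow> real"
  assumes "connected S" "continuous_on S d"
    and "\<And>x. x \<in> S \<Longrightarrow> exp (\<i> * complex_of_real (d x)) = c"
  shows "d constant_on S"
proof (rule continuous_discrete_range_constant[OF assms(1,2)])
  fix x assume x: "x \<in> S"
  show "\<exists>e>0. \<forall>y. y \<in> S \<and> d y \<noteq> d x \<longrightarrow> e \<le> norm (d y - d x)"
  proof (intro exI[of _ "2 * pi"] conjI allI impI)
    fix y assume y: "y \<in> S \<and> d y \<noteq> d x"
    then obtain n :: int where n: "d y - d x = 2 * pi * n"
      using exp_ii_eq_imp_diff_int_2pi[of "d y" "d x"] assms(3) x by auto
    with y have "n \<noteq> 0" by auto
    then have "1 \<le> \<bar>real_of_int n\<bar>" by linarith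
    then have "2 * pi * 1 \<le> 2 * pi * \<bar>real_of_int n\<bar>" by (intro mult_left_mono) auto
    then show "2 * pi \<le> norm (d y - d x)" using n by (simp add: abs_mult)
  qed simp
qed

lemma exp_ii_diff_eq_minus_one:
  assumes "exp (\<i> * complex_of_real u) = - exp (\<i> * complex_of_real v)"
  shows "exp (\<i> * complex_of_real (u - v)) = -1"
proof -
  have "exp (\<i> * complex_of_real (u - v)) = exp (\<i> * complex_of_real u) / exp (\<i> * complex_of_real v)"
    by (simp add: algebra_simps exp_diff)
  also have "\<dots> = -1" using assms by simp
  finally show ?thesis .
qed

lemma lift_antipodal_winding:
  fixes g :: "real \<times> real \<Rightarrow> real"
  assumes cont: "continuous_on (cbox (0, 0) (pi, 2 * pi)) g"
    and anti: "\<And>a b. 0 \<le> a \<Longrightarrow> a \<le> pi \<Longrightarrow> 0 \<le> b \<Longrightarrow> b \<le> pi \<Longrightarrow>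
      exp (\<i> * complex_of_real (g (a, b + pi))) = - exp (\<i> * complex_of_real (g (a, b)))"
  obtains D where "exp (\<i> * complex_of_real D) = -1"
    "\<And>a. 0 \<le> a \<Longrightarrow> a \<le> pi \<Longrightarrow> g (a, 2 * pi) - g (a, 0) = 2 * D"
proof -
  define S where "S = cbox (0::real, 0::real) (pi, pi)"
  have "(\<lambda>x. g (fst x, snd x + pi) - g x) constant_on S"
  proof (rule constant_on_if_exp_ii_constant)
    show "connected S" unfolding S_def by (intro convex_connected convex_box)
    show "continuous_on S (\<lambda>x. g (fst x, snd x + pi) - g x)"
      by (intro continuous_intros continuous_on_compose2[OF cont] continuous_on_subset[OF cont])
        (auto simp: S_def cbox_Pair_iff)
    fix x assume "x \<in> S"
    then obtain a b where "x = (a, b)" "0 \<le> a" "a \<le> pi" "0 \<le> b" "b \<le> pi"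
      by (cases x) (auto simp: S_def cbox_Pair_iff)
    then show "exp (\<i> * complex_of_real (g (fst x, snd x + pi) - g x)) = -1"
      using exp_ii_diff_eq_minus_one[OF anti] by simp
  qed
  then obtain D where D: "\<And>x. x \<in> S \<Longrightarrow> g (fst x, snd x + pi) - g x = D"
    unfolding constant_on_def by blast
  show ?thesis
  proof
    have "D = g (0, 0 + pi) - g (0, 0)" using D[of "(0, 0)"] by (simp add: S_def)
    then show "exp (\<i> * complex_of_real D) = -1"
      using exp_ii_diff_eq_minus_one[OF anti[of 0 0]] by simp
    show "g (a, 2 * pi) - g (a, 0) = 2 * D" if "0 \<le> a" "a \<le> pi" for a
      using D[of "(a, 0)"] D[of "(a, pi)"] that by (auto simp: S_def cbox_Pair_iff)
  qed
qed

lemma lift_reversed_glue_winding: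
  fixes g :: "real \<times> real \<Rightarrow> real"
  assumes cont: "continuous_on (cbox (0, 0) (pi, 2 * pi)) g"
    and glue: "\<And>b. 0 \<le> b \<Longrightarrow> b \<le> 2 * pi \<Longrightarrow>
      exp (\<i> * complex_of_real (g (pi, b))) = - exp (\<i> * complex_of_real (g (0, 2 * pi - b)))"
  shows "g (pi, 2 * pi) - g (pi, 0) = - (g (0, 2 * pi) - g (0, 0))"
proof -
  have "(\<lambda>b. g (pi, b) - g (0, 2 * pi - b)) constant_on {0..2 * pi}"
  proof (rule constant_on_if_exp_ii_constant)
    show "continuous_on {0..2 * pi} (\<lambda>b. g (pi, b) - g (0, 2 * pi - b))"
      by (intro continuous_intros continuous_on_compose2[OF cont]) (auto simp: cbox_Pair_iff)
    show "exp (\<i> * complex_of_real (g (pi, b) - g (0, 2 * pi - b))) = -1" if "b \<in> {0..2 * pi}" for b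
      using that by (intro exp_ii_diff_eq_minus_one glue) auto
  qed auto
  then obtain E where "\<And>b. b \<in> {0..2 * pi} \<Longrightarrow> g (pi, b) - g (0, 2 * pi - b) = E"
    unfolding constant_on_def by blast
  from this[of 0] this[of "2 * pi"] show ?thesis by simp
qed

text \<open>
  A continuous logarithm \<open>g\<close> of \<open>G / \<bar>G\<bar>\<close> winds by the same odd multiple \<open>2 D\<close> of \<open>pi\<close> along
  every vertical side of the rectangle, whereas the gluing reverses the side \<open>a = pi\<close> onto
  the side \<open>a = 0\<close> and so forces opposite windings there.
\<close>
lemma twisted_rectangle_map_has_zero:
  fixes G :: "real \<times> real \<Rightarrow> complex"
  assumes cont: "continuous_on UNIV G"
    and anti: "\<And>a b. G (a, b + pi) = - G (a, b)"
    and glue: "\<And>b. G (pi, b) = G (0, pi - b)"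
  shows "\<exists>a b. 0 \<le> a \<and> a \<le> pi \<and> 0 \<le> b \<and> b \<le> 2 * pi \<and> G (a, b) = 0"
proof (rule ccontr)
  assume no_zero: "\<not> ?thesis"
  define S where "S = cbox (0::real, 0::real) (pi, 2 * pi)"
  have nz: "\<And>x. x \<in> S \<Longrightarrow> G x \<noteq> 0" using no_zero by (force simp: S_def cbox_Pair_iff)
  define \<gamma> where "\<gamma> x = G x / complex_of_real (cmod (G x))" for x
  have "continuous_on S \<gamma>" unfolding \<gamma>_def
    by (intro continuous_intros continuous_on_subset[OF cont]) (auto dest: nz)
  moreover have "\<gamma> \<in> S \<rightarrow> sphere 0 1" using nz by (auto simp: \<gamma>_def norm_divide)
  moreover have "Borsukian S" unfolding S_def by (intro convex_imp_Borsukian convex_box)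
  ultimately obtain g where gc: "continuous_on S (complex_of_real \<circ> g)"
    and ge: "\<And>x. x \<in> S \<Longrightarrow> \<gamma> x = exp (\<i> * complex_of_real (g x))"
    unfolding Borsukian_continuous_logarithm_circle_real by metis
  have "continuous_on S (Re \<circ> (complex_of_real \<circ> g))" by (intro continuous_on_compose gc continuous_intros)
  then have g_cont: "continuous_on S g" by (simp add: o_def)
  have "\<gamma> (a, b + pi) = - \<gamma> (a, b)" for a b by (simp add: \<gamma>_def anti)
  then have "exp (\<i> * complex_of_real (g (a, b + pi))) = - exp (\<i> * complex_of_real (g (a, b)))"
    if "0 \<le> a" "a \<le> pi" "0 \<le> b" "b \<le> pi" for a b
    using ge[of "(a, b)"] ge[of "(a, b + pi)"] that by (auto simp: S_def cbox_Pair_iff)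
  then obtain D where D_odd: "exp (\<i> * complex_of_real D) = -1"
    and winding: "\<And>a. 0 \<le> a \<Longrightarrow> a \<le> pi \<Longrightarrow> g (a, 2 * pi) - g (a, 0) = 2 * D"
    using lift_antipodal_winding[OF g_cont[unfolded S_def]] by blast
  have "\<gamma> (pi, b) = - \<gamma> (0, 2 * pi - b)" for b
    using anti[of 0 "pi - b"] by (simp add: \<gamma>_def glue algebra_simps)
  then have "exp (\<i> * complex_of_real (g (pi, b))) = - exp (\<i> * complex_of_real (g (0, 2 * pi - b)))"
    if "0 \<le> b" "b \<le> 2 * pi" for b
    using ge[of "(pi, b)"] ge[of "(0, 2 * pi - b)"] that by (auto simp: S_def cbox_Pair_iff)
  then have "g (pi, 2 * pi) - g (pi, 0) = - (g (0, 2 * pi) - g (0, 0))"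
    by (rule lift_reversed_glue_winding[OF g_cont[unfolded S_def]])
  then have "D = 0" using winding[of pi] winding[of 0] by simp
  then show False using D_odd by simp
qed

section \<open>The bisection defect of two oriented lines\<close>

lemma sign_agreement_rotation_mono:
  fixes g h t t' :: real
  assumes "g \<noteq> 0" "0 \<le> t" "t \<le> t'" "t' \<le> pi"
    and agree: "(0 \<le> g) \<longleftrightarrow> (0 \<le> cos t' * g + sin t' * h)"
  shows "(0 \<le> g) \<longleftrightarrow> (0 \<le> cos t * g + sin t * h)"
proof -
  define v where "v = cos t * g + sin t * h"
  define w where "w = cos t' * g + sin t' * h"
  have key: "sin t' * v = sin t * w + g * sin (t' - t)"
    by (simp add: v_def w_def sin_diff algebra_simps)
  have sin_diff_nonneg: "0 \<le> sin (t' - t)" and sin_t_nonneg: "0 \<le> sin t"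
    using assms by (auto intro!: sin_ge_zero)
  consider "t' = pi" | "t' = 0" | "0 < t'" "t' < pi" using assms by linarith
  then show ?thesis
  proof cases
    case 1
    then have "(0 \<le> g) \<longleftrightarrow> (0 \<le> - g)" using agree by simp
    then show ?thesis using assms(1) by (cases "0 < g") simp_all
  next
    case 2
    then have "t = 0" using assms by linarith
    then show ?thesis using agree \<open>t' = 0\<close> by simp
  next
    case 3
    then have "0 < sin t'" by (intro sin_gt_zero)
    show ?thesis
    proof (cases "g > 0")
      case True
      then have "0 \<le> w" using agree by (simp add: w_def)
      then have "0 \<le> sin t * w" "0 \<le> g * sin (t' - t)"
        using True sin_diff_nonneg sin_t_nonneg by simp_all
      then have "0 \<le> sin t' * v" using key by linarith
      then show ?thesis using True \<open>0 < sin t'\<close> by (simp add: v_def zero_le_mult_iff)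
    next
      case False
      then have "g < 0" "w < 0" using agree assms(1) by (auto simp: w_def)
      show ?thesis
      proof (cases "t = 0")
        case False
        then have "0 < sin t" using assms 3 by (intro sin_gt_zero) auto
        then have "sin t * w < 0" "g * sin (t' - t) \<le> 0"
          using \<open>g < 0\<close> \<open>w < 0\<close> sin_diff_nonneg by (simp_all add: mult_pos_neg mult_nonpos_nonneg)
        then have "sin t' * v < 0" using key by linarith
        then show ?thesis using \<open>g < 0\<close> \<open>0 < sin t'\<close> by (simp add: v_def mult_less_0_iff)
      qed (use \<open>g < 0\<close> in simp)
    qed
  qed
qed

lemma eventually_sign_eq:
  fixes f :: "'a \<Rightarrow> real"
  assumes "(f \<longlongrightarrow> c) F" "c \<noteq> 0"
  shows "eventually (\<lambda>x. (0 \<le> f x) \<longleftrightarrow> (0 \<le> c)) F"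
proof (cases "c > 0")
  case True
  show ?thesis using order_tendstoD(1)[OF assms(1) True] by eventually_elim (use True in auto)
next
  case False
  then have "c < 0" using assms(2) by simp
  show ?thesis using order_tendstoD(2)[OF assms(1) \<open>c < 0\<close>] by eventually_elim (use \<open>c < 0\<close> in auto)
qed

definition line_value :: "oline \<Rightarrow> real^2 \<Rightarrow> real" where
  "line_value l p = fst l \<bullet> p + snd l"

definition side_sign :: "oline \<Rightarrow> oline \<Rightarrow> real^2 \<Rightarrow> real" where
  "side_sign l1 l2 p = (if (0 \<le> line_value l1 p) \<longleftrightarrow> (0 \<le> line_value l2 p) then 1 else -1)"

definition bisection_defect :: "(real^2) measure \<Rightarrow> oline \<Rightarrow> oline \<Rightarrow> real" where
  "bisection_defect \<mu> l1 l2 = integral\<^sup>L \<mu> (side_sign l1 l2)"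

lemma line_value_uminus [simp]: "line_value (- l) p = - line_value l p"
  by (simp add: line_value_def)

lemma line_value_add: "line_value (l + k) p = line_value l p + line_value k p"
  by (simp add: line_value_def inner_add_left)

lemma line_value_scaleR: "line_value (a *\<^sub>R l) p = a * line_value l p"
  by (simp add: line_value_def algebra_simps)

lemma line_value_borel [measurable]: "line_value l \<in> borel_measurable borel"
  unfolding line_value_def by (intro borel_measurable_continuous_onI continuous_intros)

lemma side_sign_borel [measurable]: "side_sign l1 l2 \<in> borel_measurable borel"
  unfolding side_sign_def by measurable

lemma tendsto_side_sign:
  assumes "X \<longlonglongrightarrow> (l1, l2)" "line_value l1 p \<noteq> 0" "line_value l2 p \<noteq> 0"
  shows "(\<lambda>n. side_sign (fst (X n)) (snd (X n)) p) \<longlonglongrightarrow> side_sign l1 l2 p"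
proof (rule tendsto_eventually)
  have "(\<lambda>n. line_value (fst (X n)) p) \<longlonglongrightarrow> line_value l1 p"
    "(\<lambda>n. line_value (snd (X n)) p) \<longlonglongrightarrow> line_value l2 p"
    unfolding line_value_def using assms(1) by (auto intro!: tendsto_intros dest: tendsto_fst tendsto_snd)
  from this(1)[THEN eventually_sign_eq, OF assms(2)] this(2)[THEN eventually_sign_eq, OF assms(3)]
  show "eventually (\<lambda>n. side_sign (fst (X n)) (snd (X n)) p = side_sign l1 l2 p) sequentially"
    by eventually_elim (simp add: side_sign_def)
qed

locale mass_distr =
  fixes \<mu> :: "(real^2) measure"
  assumes mass_distribution: "mass_distribution \<mu>"
begin

lemma space_eq [simp]: "space \<mu> = UNIV"
  using mass_distribution by (simp add: mass_distribution_def)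

lemma sets_borel: "A \<in> sets borel \<Longrightarrow> A \<in> sets \<mu>"
  using mass_distribution by (auto simp: mass_distribution_def)

lemma finite_measure: "finite_measure \<mu>"
  using mass_distribution by (intro finite_measureI) (auto simp: mass_distribution_def)

lemma total_measure_pos: "0 < measure \<mu> UNIV"
  using mass_distribution by (auto simp: mass_distribution_def finite_measure.emeasure_eq_measure[OF finite_measure])

lemma borel_measurable_from_borel: "f \<in> borel_measurable borel \<Longrightarrow> f \<in> borel_measurable \<mu>"
  by (rule borel_measurable_subalgebra[of borel]) (use mass_distribution in \<open>auto simp: mass_distribution_def\<close>)

lemma side_sign_measurable: "side_sign l1 l2 \<in> borel_measurable \<mu>"
  by (rule borel_measurable_from_borel) measurable

lemma side_sign_integrable: "integrable \<mu> (side_sign l1 l2)"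
  by (rule finite_measure.integrable_const_bound[OF finite_measure, where B = 1]) (auto simp: side_sign_def side_sign_measurable)

lemma AE_off_line:
  assumes "l \<noteq> 0"
  shows "AE p in \<mu>. line_value l p \<noteq> 0"
proof (cases "fst l = 0")
  case True
  then have "snd l \<noteq> 0" using assms by (cases l) (auto simp: zero_prod_def)
  with True show ?thesis by (simp add: line_value_def)
next
  case False
  have "{p. line_value l p = 0} \<in> sets \<mu>" by (rule sets_borel) measurable
  moreover have "emeasure \<mu> {p. line_value l p = 0} = 0"
    using mass_distribution False by (auto simp: mass_distribution_def line_value_def)
  ultimately show ?thesis by (intro AE_I'[of "{p. line_value l p = 0}"]) (auto simp: null_sets_def)
qed

lemma bisection_defect_eq_measure_diff:
  "bisection_defect \<mu> l1 l2 = measure \<mu> (R_plus [l1, l2]) - measure \<mu> (R_minus [l1, l2])"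
proof -
  define A where "A = R_plus [l1, l2]"
  have A: "A = {p. (0 \<le> line_value l1 p) \<longleftrightarrow> (0 \<le> line_value l2 p)}" "R_minus [l1, l2] = - A"
    by (auto simp: A_def R_plus_def R_minus_def lam_def pos_side_def line_value_def)
  have "A \<in> sets \<mu>" "- A \<in> sets \<mu>" unfolding A(1) by (auto intro: sets_borel)
  moreover have "side_sign l1 l2 = (\<lambda>p. indicator A p - indicator (- A) p)"
    by (auto simp: fun_eq_iff side_sign_def A(1) indicator_def)
  ultimately show ?thesis
    by (simp add: bisection_defect_def A(2) A_def[symmetric] Bochner_Integration.integral_diff
        finite_measure.integrable_const_bound[OF finite_measure, where B = 1] borel_measurable_indicator)
qed

lemma bisects_if_bisection_defect_eq_0:
  "bisection_defect \<mu> l1 l2 = 0 \<Longrightarrow> emeasure \<mu> (R_plus [l1, l2]) = emeasure \<mu> (R_minus [l1, l2])"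
  by (simp add: bisection_defect_eq_measure_diff finite_measure.emeasure_eq_measure[OF finite_measure])

lemma bisection_defect_same [simp]: "bisection_defect \<mu> l l = measure \<mu> UNIV"
proof -
  have "side_sign l l = (\<lambda>_. 1)" by (simp add: fun_eq_iff side_sign_def)
  then show ?thesis by (simp add: bisection_defect_def)
qed

lemma bisection_defect_uminus_left:
  assumes "l1 \<noteq> 0"
  shows "bisection_defect \<mu> (- l1) l2 = - bisection_defect \<mu> l1 l2"
proof -
  have "integral\<^sup>L \<mu> (side_sign (- l1) l2) = integral\<^sup>L \<mu> (\<lambda>p. - side_sign l1 l2 p)"
  proof (rule integral_cong_AE)
    show "AE p in \<mu>. side_sign (- l1) l2 p = - side_sign l1 l2 p"
      using AE_off_line[OF assms] by eventually_elim (auto simp: side_sign_def)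
  qed (use side_sign_measurable in auto)
  then show ?thesis by (simp add: bisection_defect_def)
qed

lemma bisection_defect_uminus_right:
  assumes "l2 \<noteq> 0"
  shows "bisection_defect \<mu> l1 (- l2) = - bisection_defect \<mu> l1 l2"
proof -
  have "integral\<^sup>L \<mu> (side_sign l1 (- l2)) = integral\<^sup>L \<mu> (\<lambda>p. - side_sign l1 l2 p)"
  proof (rule integral_cong_AE)
    show "AE p in \<mu>. side_sign l1 (- l2) p = - side_sign l1 l2 p"
      using AE_off_line[OF assms] by eventually_elim (auto simp: side_sign_def)
  qed (use side_sign_measurable in auto)
  then show ?thesis by (simp add: bisection_defect_def)
qed

lemma bisection_defect_rotation_mono:
  assumes "n \<noteq> 0" "0 \<le> t" "t \<le> t'" "t' \<le> pi"
  shows "bisection_defect \<mu> n (cos t' *\<^sub>R n + sin t' *\<^sub>R k)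
    \<le> bisection_defect \<mu> n (cos t *\<^sub>R n + sin t *\<^sub>R k)"
  unfolding bisection_defect_def
proof (rule integral_mono_AE[OF side_sign_integrable side_sign_integrable])
  show "AE p in \<mu>. side_sign n (cos t' *\<^sub>R n + sin t' *\<^sub>R k) p \<le> side_sign n (cos t *\<^sub>R n + sin t *\<^sub>R k) p"
    using AE_off_line[OF assms(1)]
  proof eventually_elim
    case (elim p)
    have "(0 \<le> line_value n p) \<longleftrightarrow> (0 \<le> cos t' * line_value n p + sin t' * line_value k p) \<Longrightarrow>
          (0 \<le> line_value n p) \<longleftrightarrow> (0 \<le> cos t * line_value n p + sin t * line_value k p)"
      by (rule sign_agreement_rotation_mono) (use assms elim in auto)
    then show ?case by (auto simp: side_sign_def line_value_add line_value_scaleR)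
  qed
qed

lemma continuous_on_bisection_defect_pairs:
  "continuous_on {x. fst x \<noteq> 0 \<and> snd x \<noteq> 0} (\<lambda>x. bisection_defect \<mu> (fst x) (snd x))"
proof (rule continuous_on_sequentiallyI)
  fix X :: "nat \<Rightarrow> oline \<times> oline" and a
  assume "a \<in> {x. fst x \<noteq> 0 \<and> snd x \<noteq> 0}" and lim: "X \<longlonglongrightarrow> a"
  then obtain l1 l2 where a: "a = (l1, l2)" "l1 \<noteq> 0" "l2 \<noteq> 0" by (cases a) auto
  have "(\<lambda>n. integral\<^sup>L \<mu> (side_sign (fst (X n)) (snd (X n)))) \<longlonglongrightarrow> integral\<^sup>L \<mu> (side_sign l1 l2)"
  proof (rule integral_dominated_convergence[where w = "\<lambda>_. 1"])
    show "AE p in \<mu>. (\<lambda>n. side_sign (fst (X n)) (snd (X n)) p) \<longlonglongrightarrow> side_sign l1 l2 p"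
      using AE_off_line[OF a(2)] AE_off_line[OF a(3)]
      by eventually_elim (rule tendsto_side_sign[OF lim[unfolded a(1)]])
  qed (auto simp: side_sign_measurable side_sign_def finite_measure.integrable_const[OF finite_measure])
  then show "(\<lambda>n. bisection_defect \<mu> (fst (X n)) (snd (X n))) \<longlonglongrightarrow> bisection_defect \<mu> (fst a) (snd a)"
    by (simp add: bisection_defect_def a(1))
qed

lemma continuous_on_bisection_defect:
  assumes "continuous_on S f" "continuous_on S g" "\<And>x. x \<in> S \<Longrightarrow> f x \<noteq> 0 \<and> g x \<noteq> 0"
  shows "continuous_on S (\<lambda>x. bisection_defect \<mu> (f x) (g x))"
  using continuous_on_compose2[OF continuous_on_bisection_defect_pairs, of S "\<lambda>x. (f x, g x)"] assms
  by (fastforce intro: continuous_intros)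

end

section \<open>Continuous roots of decreasing families\<close>

lemma eventually_gt_decreasing_root:
  fixes H :: "'a::t2_space \<Rightarrow> real \<Rightarrow> real"
  assumes cont: "continuous_on UNIV (\<lambda>x. H x c)"
    and dec: "\<And>x t t'. a \<le> t \<Longrightarrow> t < t' \<Longrightarrow> t' \<le> b \<Longrightarrow> H x t' < H x t"
    and root: "\<And>x. a \<le> T x \<and> T x \<le> b \<and> H x (T x) = 0"
    and c: "c < T x0"
  shows "\<forall>\<^sub>F x in at x0. c < T x"
proof (cases "c < a")
  case True
  then show ?thesis using root by (auto intro!: always_eventually less_le_trans[OF True])
next
  case False
  then have "0 < H x0 c" using dec[of c "T x0" x0] c root[of x0] by auto
  moreover have "((\<lambda>x. H x c) \<longlongrightarrow> H x0 c) (at x0)" using cont by (simp add: continuous_on_def)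
  ultimately have "\<forall>\<^sub>F x in at x0. 0 < H x c" by (simp add: order_tendstoD(1))
  then show ?thesis
  proof eventually_elim
    case (elim x)
    show ?case
    proof (rule ccontr)
      assume "\<not> c < T x"
      then have "H x c \<le> H x (T x)"
        using dec[of "T x" c x] root[of x] False c root[of x0] by (cases "T x = c") auto
      then show False using elim root[of x] by simp
    qed
  qed
qed

lemma continuous_on_decreasing_root:
  fixes H :: "'a::t2_space \<Rightarrow> real \<Rightarrow> real"
  assumes cont: "\<And>t. continuous_on UNIV (\<lambda>x. H x t)"
    and dec: "\<And>x t t'. a \<le> t \<Longrightarrow> t < t' \<Longrightarrow> t' \<le> b \<Longrightarrow> H x t' < H x t"
    and root: "\<And>x. a \<le> T x \<and> T x \<le> b \<and> H x (T x) = 0"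
  shows "continuous_on UNIV T"
proof -
  have "isCont T x0" for x0
    unfolding isCont_def
  proof (rule order_tendstoI)
    show "\<forall>\<^sub>F x in at x0. c < T x" if "c < T x0" for c
      by (rule eventually_gt_decreasing_root[OF cont dec root that])
    show "\<forall>\<^sub>F x in at x0. T x < c" if "T x0 < c" for c
    proof -
      have "\<forall>\<^sub>F x in at x0. - c < - T x"
      proof (rule eventually_gt_decreasing_root[where H = "\<lambda>x t. - H x (- t)" and a = "- b" and b = "- a"])
        show "continuous_on UNIV (\<lambda>x. - H x (- (- c)))" by (intro continuous_intros cont)
        show "- H x (- t') < - H x (- t)" if "- b \<le> t" "t < t'" "t' \<le> - a" for x t t'
          using dec[of "- t'" "- t" x] that by simp
        show "- b \<le> - T x \<and> - T x \<le> - a \<and> - H x (- (- T x)) = 0" for x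
          using root[of x] by simp
      qed (use that in simp)
      then show ?thesis by simp
    qed
  qed
  then show ?thesis by (simp add: continuous_at_imp_continuous_on)
qed

lemma continuous_root_of_decreasing_family:
  fixes H :: "'a::t2_space \<Rightarrow> real \<Rightarrow> real"
  assumes "a \<le> b"
    and "\<And>t. continuous_on UNIV (\<lambda>x. H x t)" "\<And>x. continuous_on {a..b} (H x)"
    and dec: "\<And>x t t'. a \<le> t \<Longrightarrow> t < t' \<Longrightarrow> t' \<le> b \<Longrightarrow> H x t' < H x t"
    and "\<And>x. 0 \<le> H x a" "\<And>x. H x b \<le> 0"
  obtains T where "continuous_on UNIV T" "\<And>x. a \<le> T x \<and> T x \<le> b \<and> H x (T x) = 0"
    "\<And>x s. a \<le> s \<Longrightarrow> s \<le> b \<Longrightarrow> H x s = 0 \<Longrightarrow> s = T x"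
proof -
  have "\<exists>t. a \<le> t \<and> t \<le> b \<and> H x t = 0" for x
    using IVT2'[of "H x" b 0 a] assms by auto
  then obtain T where root: "\<And>x. a \<le> T x \<and> T x \<le> b \<and> H x (T x) = 0" by metis
  moreover have "s = T x" if "a \<le> s" "s \<le> b" "H x s = 0" for x s
    using dec[of s "T x" x] dec[of "T x" s x] root[of x] that by (cases s "T x" rule: linorder_cases) auto
  ultimately show ?thesis using that continuous_on_decreasing_root[OF assms(2) dec root] by blast
qed

section \<open>Oriented lines in spherical coordinates\<close>

definition unit_dir :: "real \<Rightarrow> real^2" where
  "unit_dir \<theta> = cos \<theta> *\<^sub>R axis 1 1 + sin \<theta> *\<^sub>R axis 2 1"

definition line_through :: "real^2 \<Rightarrow> real \<Rightarrow> oline" where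
  "line_through q \<theta> = (unit_dir \<theta>, - (unit_dir \<theta> \<bullet> q))"

definition line_at_infinity :: oline where
  "line_at_infinity = (0, 1)"

text \<open>
  The line at infinity and the two perpendicular lines through \<open>q\<close> form a basis of the
  space of affine functions, so \<open>sphere_line q \<theta>\<close> runs through all oriented lines up to positive
  scaling, in spherical coordinates with pole \<open>line_through q \<theta>\<close>.
\<close>
definition equator_line :: "real^2 \<Rightarrow> real \<Rightarrow> real \<Rightarrow> oline" where
  "equator_line q \<theta> \<phi> = cos \<phi> *\<^sub>R line_at_infinity + sin \<phi> *\<^sub>R line_through q (\<theta> + pi / 2)"

definition sphere_line :: "real^2 \<Rightarrow> real \<Rightarrow> real \<Rightarrow> real \<Rightarrow> oline" where
  "sphere_line q \<theta> \<phi> t = cos t *\<^sub>R line_through q \<theta> + sin t *\<^sub>R equator_line q \<theta> \<phi>"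

lemma inner_unit_dir: "unit_dir \<alpha> \<bullet> unit_dir \<beta> = cos (\<alpha> - \<beta>)"
  by (simp add: unit_dir_def inner_add_left inner_add_right inner_axis_axis cos_diff)

lemma proper_line_through: "proper_line (line_through q \<theta>)"
  using inner_unit_dir[of \<theta> \<theta>] by (auto simp: proper_line_def line_through_def)

lemma line_through_nonzero: "line_through q \<theta> \<noteq> 0"
  using proper_line_through[of q \<theta>] by (auto simp: proper_line_def zero_prod_def)

lemma on_line_through: "on_line q (line_through q \<theta>)"
  by (simp add: on_line_def line_through_def inner_commute)

lemma sphere_line_nonzero: "sphere_line q \<theta> \<phi> t \<noteq> 0"
proof
  assume h: "sphere_line q \<theta> \<phi> t = 0"
  have dir: "cos t *\<^sub>R unit_dir \<theta> + (sin t * sin \<phi>) *\<^sub>R unit_dir (\<theta> + pi / 2) = 0"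
    using arg_cong[OF h, of fst]
    by (simp add: sphere_line_def equator_line_def line_through_def line_at_infinity_def)
  have offset: "cos t * (- (unit_dir \<theta> \<bullet> q))
      + sin t * (cos \<phi> + sin \<phi> * (- (unit_dir (\<theta> + pi / 2) \<bullet> q))) = 0"
    using arg_cong[OF h, of snd]
    by (simp add: sphere_line_def equator_line_def line_through_def line_at_infinity_def)
  have "cos t = 0" "sin t * sin \<phi> = 0"
    using arg_cong[OF dir, of "\<lambda>v. v \<bullet> unit_dir \<theta>"] arg_cong[OF dir, of "\<lambda>v. v \<bullet> unit_dir (\<theta> + pi / 2)"]
    by (simp_all add: inner_add_left inner_unit_dir)
  moreover from this have "sin t \<noteq> 0" using sin_cos_squared_add[of t] by auto
  ultimately have "sin \<phi> = 0" "cos \<phi> = 0" using offset by auto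
  then show False using sin_cos_squared_add[of \<phi>] by simp
qed

lemma continuous_on_line_through [continuous_intros]:
  fixes f :: "'a::t2_space \<Rightarrow> real"
  assumes "continuous_on S f"
  shows "continuous_on S (\<lambda>x. line_through q (f x))"
  unfolding line_through_def unit_dir_def by (intro continuous_intros assms)

lemma continuous_on_sphere_line [continuous_intros]:
  fixes f g h :: "'a::t2_space \<Rightarrow> real"
  assumes "continuous_on S f" "continuous_on S g" "continuous_on S h"
  shows "continuous_on S (\<lambda>x. sphere_line q (f x) (g x) (h x))"
  unfolding sphere_line_def equator_line_def by (intro continuous_intros assms)

lemma line_through_add_pi: "line_through q (\<theta> + pi) = - line_through q \<theta>"
  by (simp add: line_through_def unit_dir_def inner_diff_left inner_add_left)

lemma line_through_pi: "line_through q pi = - line_through q 0"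
  using line_through_add_pi[of q 0] by simp

lemma sphere_line_antipodal: "sphere_line q \<theta> (\<phi> + pi) (pi - t) = - sphere_line q \<theta> \<phi> t"
  by (simp add: sphere_line_def equator_line_def algebra_simps)

lemma sphere_line_pi: "sphere_line q pi \<phi> t = - sphere_line q 0 (pi - \<phi>) t"
  using line_through_add_pi[of q "pi / 2"]
  by (simp add: sphere_line_def equator_line_def line_through_pi algebra_simps)

section \<open>Simultaneous bisection\<close>

definition sphere_defect :: "(real^2) measure \<Rightarrow> real^2 \<Rightarrow> real \<Rightarrow> real \<Rightarrow> real \<Rightarrow> real" where
  "sphere_defect \<mu> q \<theta> \<phi> t = bisection_defect \<mu> (line_through q \<theta>) (sphere_line q \<theta> \<phi> t)"

context mass_distr
begin

lemma continuous_on_sphere_defect [continuous_intros]: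
  fixes f g h :: "'a::t2_space \<Rightarrow> real"
  assumes "continuous_on S f" "continuous_on S g" "continuous_on S h"
  shows "continuous_on S (\<lambda>x. sphere_defect \<mu> q (f x) (g x) (h x))"
  unfolding sphere_defect_def
  by (intro continuous_on_bisection_defect continuous_intros assms)
    (simp add: line_through_nonzero sphere_line_nonzero)

lemma sphere_defect_antimono:
  "0 \<le> t \<Longrightarrow> t \<le> t' \<Longrightarrow> t' \<le> pi \<Longrightarrow> sphere_defect \<mu> q \<theta> \<phi> t' \<le> sphere_defect \<mu> q \<theta> \<phi> t"
  unfolding sphere_defect_def sphere_line_def
  by (rule bisection_defect_rotation_mono) (auto simp: line_through_nonzero)

lemma sphere_defect_0: "sphere_defect \<mu> q \<theta> \<phi> 0 = measure \<mu> UNIV"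
  by (simp add: sphere_defect_def sphere_line_def)

lemma sphere_defect_pi: "sphere_defect \<mu> q \<theta> \<phi> pi = - measure \<mu> UNIV"
  by (simp add: sphere_defect_def sphere_line_def bisection_defect_uminus_right line_through_nonzero)

lemma sphere_defect_antipodal: "sphere_defect \<mu> q \<theta> (\<phi> + pi) (pi - t) = - sphere_defect \<mu> q \<theta> \<phi> t"
  by (simp add: sphere_defect_def sphere_line_antipodal bisection_defect_uminus_right sphere_line_nonzero)

lemma sphere_defect_glue: "sphere_defect \<mu> q pi \<phi> t = sphere_defect \<mu> q 0 (pi - \<phi>) t"
  by (simp add: sphere_defect_def sphere_line_pi line_through_pi line_through_nonzero sphere_line_nonzero
      bisection_defect_uminus_left bisection_defect_uminus_right)

end

text \<open>
  The defect is only weakly decreasing in \<open>t\<close>; adding \<open>\<epsilon> cos t\<close> makes it strictly decreasing,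
  so that its root in \<open>t\<close> is unique, hence continuous and compatible with the symmetries of
  the parametrisation.
\<close>
lemma perturbed_root_section:
  assumes "mass_distr \<mu>" "0 < \<epsilon>"
  obtains T where "continuous_on UNIV T" "\<And>x. 0 \<le> T x \<and> T x \<le> pi"
    "\<And>x. sphere_defect \<mu> q (fst x) (snd x) (T x) = - \<epsilon> * cos (T x)"
    "\<And>a b. T (a, b + pi) = pi - T (a, b)" "\<And>b. T (pi, b) = T (0, pi - b)"
proof -
  interpret mass_distr \<mu> by fact
  define H where "H x t = sphere_defect \<mu> q (fst x) (snd x) t + \<epsilon> * cos t" for x :: "real \<times> real" and t
  have H_cont: "continuous_on UNIV (\<lambda>x. H x t)" "continuous_on S (H x)" for x t S
    unfolding H_def by (intro continuous_intros)+
  have H_dec: "H x t' < H x t" if "0 \<le> t" "t < t'" "t' \<le> pi" for x t t'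
  proof -
    have "\<epsilon> * cos t' < \<epsilon> * cos t"
      using that \<open>0 < \<epsilon>\<close> by (intro mult_strict_left_mono cos_monotone_0_pi) auto
    moreover have "sphere_defect \<mu> q (fst x) (snd x) t' \<le> sphere_defect \<mu> q (fst x) (snd x) t"
      using that by (intro sphere_defect_antimono) auto
    ultimately show ?thesis unfolding H_def by linarith
  qed
  have H_ends: "0 \<le> H x 0" "H x pi \<le> 0" for x
    using total_measure_pos \<open>0 < \<epsilon>\<close> by (simp_all add: H_def sphere_defect_0 sphere_defect_pi)
  obtain T where T_cont: "continuous_on UNIV T"
    and T_root: "\<And>x. 0 \<le> T x \<and> T x \<le> pi \<and> H x (T x) = 0"
    and T_unique: "\<And>x s. 0 \<le> s \<Longrightarrow> s \<le> pi \<Longrightarrow> H x s = 0 \<Longrightarrow> s = T x"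
    by (rule continuous_root_of_decreasing_family[of 0 pi H, OF _ H_cont H_dec H_ends]) auto
  have T_antipodal: "T (a, b + pi) = pi - T (a, b)" for a b
  proof -
    have "H (a, b + pi) (pi - T (a, b)) = - H (a, b) (T (a, b))"
      by (simp add: H_def sphere_defect_antipodal)
    then show ?thesis using T_root[of "(a, b)"] by (intro T_unique[symmetric]) auto
  qed
  have T_glue: "T (pi, b) = T (0, pi - b)" for b
  proof -
    have "H (pi, b) = H (0, pi - b)" by (simp add: fun_eq_iff H_def sphere_defect_glue)
    then show ?thesis using T_root[of "(0, pi - b)"] by (intro T_unique[symmetric]) auto
  qed
  show ?thesis
  proof (rule that[OF T_cont _ _ T_antipodal T_glue])
    show "0 \<le> T x \<and> T x \<le> pi" "sphere_defect \<mu> q (fst x) (snd x) (T x) = - \<epsilon> * cos (T x)" for x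
      using T_root[of x] by (simp_all add: H_def eq_neg_iff_add_eq_0)
  qed
qed

lemma nearly_bisecting_parameters:
  assumes m1: "mass_distr \<mu>1" and m2: "mass_distr \<mu>2" and m3: "mass_distr \<mu>3" and "0 < \<epsilon>"
  shows "\<exists>\<theta> \<phi> t. (\<theta>, \<phi>, t) \<in> {0..pi} \<times> {0..2 * pi} \<times> {0..pi} \<and>
    sphere_defect \<mu>1 q \<theta> \<phi> t = 0 \<and> sphere_defect \<mu>2 q \<theta> \<phi> t = 0 \<and> \<bar>sphere_defect \<mu>3 q \<theta> \<phi> t\<bar> \<le> \<epsilon>"
proof -
  obtain T where T_cont: "continuous_on UNIV T" and T_bounds: "\<And>x. 0 \<le> T x \<and> T x \<le> pi"
    and T_defect: "\<And>x. sphere_defect \<mu>3 q (fst x) (snd x) (T x) = - \<epsilon> * cos (T x)"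
    and T_antipodal: "\<And>a b. T (a, b + pi) = pi - T (a, b)"
    and T_glue: "\<And>b. T (pi, b) = T (0, pi - b)"
    by (rule perturbed_root_section[OF m3 \<open>0 < \<epsilon>\<close>, where q = q]) blast
  define G where "G x = complex_of_real (sphere_defect \<mu>1 q (fst x) (snd x) (T x))
    + \<i> * complex_of_real (sphere_defect \<mu>2 q (fst x) (snd x) (T x))" for x
  have "continuous_on UNIV G" unfolding G_def
    by (intro continuous_intros mass_distr.continuous_on_sphere_defect[OF m1]
        mass_distr.continuous_on_sphere_defect[OF m2] T_cont)
  moreover have "G (a, b + pi) = - G (a, b)" for a b
    by (simp add: G_def T_antipodal mass_distr.sphere_defect_antipodal[OF m1]
        mass_distr.sphere_defect_antipodal[OF m2])
  moreover have "G (pi, b) = G (0, pi - b)" for b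
    by (simp add: G_def T_glue mass_distr.sphere_defect_glue[OF m1] mass_distr.sphere_defect_glue[OF m2])
  ultimately obtain a b where ab: "0 \<le> a" "a \<le> pi" "0 \<le> b" "b \<le> 2 * pi" "G (a, b) = 0"
    using twisted_rectangle_map_has_zero by blast
  have "sphere_defect \<mu>1 q a b (T (a, b)) = 0" "sphere_defect \<mu>2 q a b (T (a, b)) = 0"
    using arg_cong[OF ab(5), of Re] arg_cong[OF ab(5), of Im] by (simp_all add: G_def)
  moreover have "\<bar>sphere_defect \<mu>3 q a b (T (a, b))\<bar> \<le> \<epsilon>"
    using T_defect[of "(a, b)"] \<open>0 < \<epsilon>\<close> by (simp add: abs_mult)
  ultimately show ?thesis using ab T_bounds[of "(a, b)"] by auto
qed

lemma bisecting_parameters: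
  assumes m1: "mass_distr \<mu>1" and m2: "mass_distr \<mu>2" and m3: "mass_distr \<mu>3"
  shows "\<exists>\<theta> \<phi> t. sphere_defect \<mu>1 q \<theta> \<phi> t = 0 \<and> sphere_defect \<mu>2 q \<theta> \<phi> t = 0 \<and>
    sphere_defect \<mu>3 q \<theta> \<phi> t = 0"
proof -
  define D where "D \<mu> x = sphere_defect \<mu> q (fst x) (fst (snd x)) (snd (snd x))"
    for \<mu> and x :: "real \<times> real \<times> real"
  define \<Psi> where "\<Psi> x = \<bar>D \<mu>1 x\<bar> + \<bar>D \<mu>2 x\<bar> + \<bar>D \<mu>3 x\<bar>" for x
  define B :: "(real \<times> real \<times> real) set" where "B = {0..pi} \<times> {0..2 * pi} \<times> {0..pi}"
  have "continuous_on B \<Psi>" unfolding \<Psi>_def D_def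
    by (intro continuous_intros mass_distr.continuous_on_sphere_defect[OF m1]
        mass_distr.continuous_on_sphere_defect[OF m2] mass_distr.continuous_on_sphere_defect[OF m3])
  moreover have "compact B" "B \<noteq> {}" unfolding B_def by (auto intro!: compact_Times)
  ultimately obtain x0 where x0: "\<And>y. y \<in> B \<Longrightarrow> \<Psi> x0 \<le> \<Psi> y"
    using continuous_attains_inf by metis
  have "\<Psi> x0 \<le> \<epsilon>" if eps: "0 < \<epsilon>" for \<epsilon>
  proof -
    obtain \<theta> \<phi> t where "(\<theta>, \<phi>, t) \<in> B" "D \<mu>1 (\<theta>, \<phi>, t) = 0" "D \<mu>2 (\<theta>, \<phi>, t) = 0"
      "\<bar>D \<mu>3 (\<theta>, \<phi>, t)\<bar> \<le> \<epsilon>"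
      using nearly_bisecting_parameters[OF m1 m2 m3 eps, of q] unfolding B_def D_def by auto
    then show ?thesis using x0[of "(\<theta>, \<phi>, t)"] by (simp add: \<Psi>_def)
  qed
  then have "\<Psi> x0 \<le> 0" by (metis field_le_epsilon add_0)
  then have "D \<mu>1 x0 = 0" "D \<mu>2 x0 = 0" "D \<mu>3 x0 = 0" unfolding \<Psi>_def by linarith+
  then show ?thesis unfolding D_def by blast
qed

theorem theorem4:
  fixes \<mu>1 \<mu>2 \<mu>3 :: "(real^2) measure" and q :: "real^2"
  assumes "mass_distribution \<mu>1" "mass_distribution \<mu>2" "mass_distribution \<mu>3"
  shows "\<exists>l1 l2. proper_line l1 \<and> valid_line l2 \<and> on_line q l1 \<and>
           simul_bisects [l1, l2] [\<mu>1, \<mu>2, \<mu>3]"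
proof -
  have m: "mass_distr \<mu>1" "mass_distr \<mu>2" "mass_distr \<mu>3"
    using assms by (simp_all add: mass_distr_def)
  then obtain \<theta> \<phi> t
    where "sphere_defect \<mu>1 q \<theta> \<phi> t = 0" "sphere_defect \<mu>2 q \<theta> \<phi> t = 0" "sphere_defect \<mu>3 q \<theta> \<phi> t = 0"
    using bisecting_parameters by blast
  then have "simul_bisects [line_through q \<theta>, sphere_line q \<theta> \<phi> t] [\<mu>1, \<mu>2, \<mu>3]"
    using m by (simp add: simul_bisects_def sphere_defect_def mass_distr.bisects_if_bisection_defect_eq_0)
  moreover have "valid_line (sphere_line q \<theta> \<phi> t)"
    using sphere_line_nonzero[of q \<theta> \<phi> t] by (auto simp: valid_line_def prod_eq_iff)
  ultimately show ?thesis using proper_line_through on_line_through by blast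
qed

end
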